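(* In Algorithm MV (see context), if all processes are correct and they all propose the same value $v$, then WHP all processes decide $v$.
   Context: System and adversary: a well-known static set $\Pi$ of $n$ processes; an adversary may adaptively corrupt up to $f=(\frac13-\epsilon)n$ processes during a run, where $\frac{1}{2\ln n}<\epsilon<\frac13$. Corrupted (Byzantine) processes may deviate arbitrarily; uncorrupted processes are correct. Once the adversary corrupts a process it cannot replace messages that process already sent while correct. Every pair of processes is connected by a reliable authenticated link; the network is asynchronous. There is a trusted PKI; the adversary is computationally bounded; $\langle v\rangle_i$ denotes $v$ signed by $p_i$. Validated committee sampling: each $p_i$ has a private function $\mathit{sample}_i(s,\lambda)$ returning $\langle v_i,\sigma_i\rangle$ with $v_i\in\{\mathit{true},\mathit{false}\}$ ($p_i$ is "sampled" iff $v_i=\mathit{true}$, probability $\lambda/n$) and an unforgeable publicly verifiable proof $\sigma_i$; "validly sampled $p_j$" means the message carries a valid such proof. Let $C(s,\lambda)$ be the committee for $s,\lambda$. Parameters: $\lambda=8\ln n$; $\frac1\lambda<d<\frac\epsilon3-\frac1{3\lambda}$; $W=\lceil(\frac23+3d)\lambda\rceil$, $B=\lfloor(\frac13-d)\lambda\rfloor$. Assumed WHP for each committee: (S3) at least $W$ members are correct; (S4) at most $B$ members are Byzantine; (S5) any two $W$-subsets of the committee intersect in at least $B+1$ processes. WHP means with probability tending to $1$ as $n\to\infty$. The binary BA used is a black-box Binary Strong BA WHP: WHP strong unanimity (if all correct processes propose the same bit, any deciding correct process decides it), agreement, and termination. Algorithm MV (code for $p_i$ with input $v_i$; local: $\mathit{count}=0$,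 empty sets $\mathit{init\text{-}set},\mathit{init\text{-}values\text{-}set},\mathit{converge\text{-}set}$): (1) If $p_i$ is sampled for $(\textsc{init},\lambda)$, broadcast $\langle\textsc{init},v_i\rangle_i$. (2) On receiving $\langle\textsc{init},v_j\rangle_j$ from validly sampled $p_j$: add $j$ to $\mathit{init\text{-}set}$, $v_j$ to $\mathit{init\text{-}values\text{-}set}$. If $p_i$ is sampled for $(\textsc{converge},\lambda)$ and $|\mathit{init\text{-}set}|=W$ for the first time: if $\mathit{init\text{-}values\text{-}set}=\{v_i\}$, batch the $W$ signed \textsc{init} messages into $QC_{v_i}$ and send $\langle\textsc{converge},\mathit{true},QC_{v_i}\rangle_i$ to all; else send $\langle\textsc{converge},\mathit{false},\bot\rangle_i$ to all. (3) On receiving $\langle\textsc{converge},\mathit{is\_content},QC_v\rangle_j$ from validly sampled $p_j$: add $j$ to $\mathit{converge\text{-}set}$; if $\mathit{is\_content}=\mathit{true}$ increment $\mathit{count}$. When $|\mathit{converge\text{-}set}|=W$ for the first time: $\mathit{alert}\gets(\mathit{count}<B+1)$; run binary BA on $\mathit{alert}$; if the output is $\mathit{true}$ decide $\bot$; else wait for some $\langle\textsc{converge},\mathit{true},QC_v\rangle_j$ from a validly sampled $p_j$ and decide $v$. A valid $QC_v$ consists of $W$ signed \textsc{init} messages on $v$ from $W$ distinct validly sampled processes. *)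

theory Defs
  imports "HOL-Probability.Probability"
begin

datatype tag = Init | Converge

datatype 'v decision = Bot | Val 'v

(* Abstract record of a run of Algorithm MV in which every process is correct.
   Processes are 0..<n.
   sampled s i : result v_i of sample_i(s, lambda) (lambda = 8 ln n)
   input i     : the proposal v_i of p_i
   t_init j i  : (global) time at which p_j receives the INIT message of p_i
   t_conv k j  : (global) time at which p_k receives the CONVERGE message of p_j
   ba_out k    : output of the binary BA at p_k (None = never outputs)
   decided k   : decision of p_k (None = never decides) *)
record 'v mv_run =
  sampled :: "tag \<Rightarrow> nat \<Rightarrow> bool"
  input :: "nat \<Rightarrow> 'v"
  t_init :: "nat \<Rightarrow> nat \<Rightarrow> nat"
  t_conv :: "nat \<Rightarrow> nat \<Rightarrow> nat"
  ba_out :: "nat \<Rightarrow> bool option"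
  decided :: "nat \<Rightarrow> 'v decision option"

definition lam :: "nat \<Rightarrow> real" where
  "lam n = 8 * ln (real n)"

definition Wq :: "(nat \<Rightarrow> real) \<Rightarrow> nat \<Rightarrow> nat" where
  "Wq d n = nat \<lceil>(2/3 + 3 * d n) * lam n\<rceil>"

definition Bq :: "(nat \<Rightarrow> real) \<Rightarrow> nat \<Rightarrow> nat" where
  "Bq d n = nat \<lfloor>(1/3 - d n) * lam n\<rfloor>"

definition committee :: "nat \<Rightarrow> 'v mv_run \<Rightarrow> tag \<Rightarrow> nat set" where
  "committee n r s = {i. i < n \<and> sampled r s i}"

definition init_set_at :: "nat \<Rightarrow> 'v mv_run \<Rightarrow> nat \<Rightarrow> nat \<Rightarrow> nat set" where
  "init_set_at n r j t = {i. i \<in> committee n r Init \<and> t_init r j i \<le> t}"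

definition reaches_init :: "nat \<Rightarrow> nat \<Rightarrow> 'v mv_run \<Rightarrow> nat \<Rightarrow> bool" where
  "reaches_init n W r j \<longleftrightarrow> (\<exists>t. card (init_set_at n r j t) = W)"

definition init_thr_time :: "nat \<Rightarrow> nat \<Rightarrow> 'v mv_run \<Rightarrow> nat \<Rightarrow> nat" where
  "init_thr_time n W r j = (LEAST t. card (init_set_at n r j t) = W)"

definition init_qc_set :: "nat \<Rightarrow> nat \<Rightarrow> 'v mv_run \<Rightarrow> nat \<Rightarrow> nat set" where
  "init_qc_set n W r j = init_set_at n r j (init_thr_time n W r j)"

definition conv_sent :: "nat \<Rightarrow> nat \<Rightarrow> 'v mv_run \<Rightarrow> nat \<Rightarrow> bool" where
  "conv_sent n W r j \<longleftrightarrow> j \<in> committee n r Converge \<and> reaches_init n W r j"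

(* is_content flag of p_j's CONVERGE message (init-values-set = {v_j});
   if true it carries QC_{v_j} *)
definition conv_content :: "nat \<Rightarrow> nat \<Rightarrow> 'v mv_run \<Rightarrow> nat \<Rightarrow> bool" where
  "conv_content n W r j \<longleftrightarrow> input r ` init_qc_set n W r j = {input r j}"

definition conv_set_at :: "nat \<Rightarrow> nat \<Rightarrow> 'v mv_run \<Rightarrow> nat \<Rightarrow> nat \<Rightarrow> nat set" where
  "conv_set_at n W r k t = {j. conv_sent n W r j \<and> t_conv r k j \<le> t}"

definition reaches_conv :: "nat \<Rightarrow> nat \<Rightarrow> 'v mv_run \<Rightarrow> nat \<Rightarrow> bool" where
  "reaches_conv n W r k \<longleftrightarrow> (\<exists>t. card (conv_set_at n W r k t) = W)"

definition conv_thr_time :: "nat \<Rightarrow> nat \<Rightarrow> 'v mv_run \<Rightarrow> nat \<Rightarrow> nat" where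
  "conv_thr_time n W r k = (LEAST t. card (conv_set_at n W r k t) = W)"

definition conv_count :: "nat \<Rightarrow> nat \<Rightarrow> 'v mv_run \<Rightarrow> nat \<Rightarrow> nat" where
  "conv_count n W r k =
     card {j \<in> conv_set_at n W r k (conv_thr_time n W r k). conv_content n W r j}"

definition ba_in :: "nat \<Rightarrow> nat \<Rightarrow> nat \<Rightarrow> 'v mv_run \<Rightarrow> nat \<Rightarrow> bool option" where
  "ba_in n W B r k =
     (if reaches_conv n W r k then Some (conv_count n W r k < B + 1) else None)"

(* r is a (fault-free, asynchronous, reliable-link) execution of Algorithm MV *)
definition mv_execution :: "nat \<Rightarrow> nat \<Rightarrow> nat \<Rightarrow> 'v mv_run \<Rightarrow> bool" where
  "mv_execution n W B r \<longleftrightarrow>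
     (\<forall>j<n. inj_on (t_init r j) (committee n r Init)) \<and>
     (\<forall>k<n. inj_on (t_conv r k) {j. conv_sent n W r j}) \<and>
     (\<forall>k<n. \<forall>j. conv_sent n W r j \<longrightarrow> init_thr_time n W r j < t_conv r k j) \<and>
     (\<forall>k<n. ba_out r k \<noteq> None \<longrightarrow> ba_in n W B r k \<noteq> None) \<and>
     (\<forall>k<n.
        (decided r k = Some Bot \<longleftrightarrow> ba_out r k = Some True) \<and>
        (\<forall>w. decided r k = Some (Val w) \<longrightarrow>
              ba_out r k = Some False \<and>
              (\<exists>j. conv_sent n W r j \<and> conv_content n W r j \<and> w = input r j)) \<and>
        (ba_out r k = Some False \<and> (\<exists>j. conv_sent n W r j \<and> conv_content n W r j)
           \<longrightarrow> decided r k \<noteq> None))"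

(* the black-box binary BA instance satisfies strong unanimity, agreement, termination *)
definition binary_ba_ok :: "nat \<Rightarrow> nat \<Rightarrow> nat \<Rightarrow> 'v mv_run \<Rightarrow> bool" where
  "binary_ba_ok n W B r \<longleftrightarrow>
     (\<forall>b. (\<forall>k<n. ba_in n W B r k = Some b) \<longrightarrow>
          (\<forall>k<n. ba_out r k \<noteq> None \<longrightarrow> ba_out r k = Some b)) \<and>
     (\<forall>k<n. \<forall>k'<n. \<forall>b b'. ba_out r k = Some b \<and> ba_out r k' = Some b' \<longrightarrow> b = b') \<and>
     ((\<forall>k<n. ba_in n W B r k \<noteq> None) \<longrightarrow> (\<forall>k<n. ba_out r k \<noteq> None))"

definition committee_props :: "nat \<Rightarrow> nat \<Rightarrow> nat set \<Rightarrow> nat set \<Rightarrow> bool" where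
  "committee_props W B correct C \<longleftrightarrow>
     W \<le> card (C \<inter> correct) \<and>
     card (C - correct) \<le> B \<and>
     (\<forall>S1 S2. S1 \<subseteq> C \<and> S2 \<subseteq> C \<and> card S1 = W \<and> card S2 = W \<longrightarrow> B + 1 \<le> card (S1 \<inter> S2))"

definition whp :: "(nat \<Rightarrow> 'w measure) \<Rightarrow> (nat \<Rightarrow> 'w \<Rightarrow> bool) \<Rightarrow> bool" where
  "whp M P \<longleftrightarrow>
     (\<exists>E. (\<forall>n. E n \<in> sets (M n) \<and> E n \<subseteq> {\<omega> \<in> space (M n). P n \<omega>}) \<and>
          (\<lambda>n. measure (M n) (E n)) \<longlonglongrightarrow> 1)"

end

theory Submission
  imports Defs
begin

text \<open>In a fault-free run every process eventually hears from all of the (at least \<open>W\<close>)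
  members of the INIT committee, so each CONVERGE member forms a quorum certificate; since all
  inputs equal \<open>v\<close>, every CONVERGE message is content. Every process therefore counts
  \<open>W > B\<close> content messages and proposes \<open>alert = false\<close> to the binary BA, whose strong
  unanimity forces output \<open>false\<close>, after which the certificates yield the decision \<open>v\<close>.
  The three probabilistic assumptions hold simultaneously WHP, since a finite intersection of
  events of probability tending to one again has probability tending to one.\<close>

lemma prob_Int_lower_bound:
  assumes "prob_space M" "A \<in> sets M" "B \<in> sets M"
  shows "measure M A + measure M B - 1 \<le> measure M (A \<inter> B)"
proof -
  interpret prob_space M by fact
  have "measure M (A \<union> B) = measure M A + measure M B - measure M (A \<inter> B)"
    using assms by (simp add: measure_Un3 fmeasurable_eq_sets)
  moreover have "measure M (A \<union> B) \<le> 1" by (rule prob_le_1)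
  ultimately show ?thesis by linarith
qed

lemma whp_conj:
  assumes prob: "\<And>n. prob_space (M n)" and "whp M P" "whp M Q"
  shows "whp M (\<lambda>n \<omega>. P n \<omega> \<and> Q n \<omega>)"
proof -
  obtain E where E: "\<And>n. E n \<in> sets (M n)" "\<And>n. E n \<subseteq> {\<omega> \<in> space (M n). P n \<omega>}"
    "(\<lambda>n. measure (M n) (E n)) \<longlonglongrightarrow> 1"
    using \<open>whp M P\<close> unfolding whp_def by blast
  obtain F where F: "\<And>n. F n \<in> sets (M n)" "\<And>n. F n \<subseteq> {\<omega> \<in> space (M n). Q n \<omega>}"
    "(\<lambda>n. measure (M n) (F n)) \<longlonglongrightarrow> 1"
    using \<open>whp M Q\<close> unfolding whp_def by blast
  have lower: "\<forall>n. measure (M n) (E n) + measure (M n) (F n) - 1 \<le> measure (M n) (E n \<inter> F n)"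
    using prob_Int_lower_bound[OF prob E(1) F(1)] by blast
  have upper: "\<forall>n. measure (M n) (E n \<inter> F n) \<le> 1"
    using prob_space.prob_le_1[OF prob] by blast
  have "(\<lambda>n. measure (M n) (E n) + measure (M n) (F n) - 1) \<longlonglongrightarrow> 1"
    using tendsto_diff[OF tendsto_add[OF E(3) F(3)] tendsto_const[of 1]] by simp
  then have "(\<lambda>n. measure (M n) (E n \<inter> F n)) \<longlonglongrightarrow> 1"
    using tendsto_sandwich[OF always_eventually[OF lower] always_eventually[OF upper]] by blast
  moreover have "E n \<inter> F n \<in> sets (M n)" "E n \<inter> F n \<subseteq> {\<omega> \<in> space (M n). P n \<omega> \<and> Q n \<omega>}" for n
    using E(1,2)[of n] F(1,2)[of n] by auto
  ultimately show ?thesis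
    unfolding whp_def by (intro exI[of _ "\<lambda>n. E n \<inter> F n"]) blast
qed

lemma whp_eventually_mono:
  assumes "whp M P"
    and "eventually (\<lambda>n. \<forall>\<omega> \<in> space (M n). P n \<omega> \<longrightarrow> Q n \<omega>) sequentially"
  shows "whp M Q"
proof -
  obtain E where E: "\<And>n. E n \<in> sets (M n)" "\<And>n. E n \<subseteq> {\<omega> \<in> space (M n). P n \<omega>}"
    "(\<lambda>n. measure (M n) (E n)) \<longlonglongrightarrow> 1"
    using \<open>whp M P\<close> unfolding whp_def by blast
  obtain N where N: "\<And>n. N \<le> n \<Longrightarrow> \<forall>\<omega> \<in> space (M n). P n \<omega> \<longrightarrow> Q n \<omega>"
    using assms(2) unfolding eventually_sequentially by blast
  define E' where "E' n = (if N \<le> n then E n else {})" for n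
  have "E' n \<in> sets (M n)" "E' n \<subseteq> {\<omega> \<in> space (M n). Q n \<omega>}" for n
    using E(1,2)[of n] N[of n] unfolding E'_def by auto
  moreover have "eventually (\<lambda>n. measure (M n) (E n) = measure (M n) (E' n)) sequentially"
    unfolding E'_def eventually_sequentially by auto
  with E(3) have "(\<lambda>n. measure (M n) (E' n)) \<longlonglongrightarrow> 1"
    by (rule Lim_transform_eventually)
  ultimately show ?thesis
    unfolding whp_def by (intro exI[of _ E']) blast
qed

lemma card_fiber_le_1:
  assumes "inj_on f C"
  shows "card {i \<in> C. f i = t} \<le> 1"
proof (cases "\<exists>x \<in> C. f x = t")
  case True
  then obtain x where "x \<in> C" "f x = t" by blast
  then have "{i \<in> C. f i = t} = {x}" using assms by (auto simp: inj_on_def)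
  then show ?thesis by simp
next
  case False
  then have "{i \<in> C. f i = t} = {}" by auto
  then show ?thesis by (metis card.empty zero_le_one)
qed

text \<open>If distinct members of \<open>C\<close> arrive at distinct times, the number of arrivals grows by
  at most one per time step, so it hits every threshold between \<open>1\<close> and \<open>card C\<close>.\<close>

lemma inj_on_arrivals_hit_threshold:
  fixes f :: "'a \<Rightarrow> nat"
  assumes fin: "finite C" and inj: "inj_on f C" and W: "1 \<le> W" "W \<le> card C"
  shows "\<exists>t. card {i \<in> C. f i \<le> t} = W"
proof -
  define g where "g t = card {i \<in> C. f i \<le> t}" for t
  have step: "g (Suc t) \<le> g t + 1" for t
  proof -
    have split: "{i \<in> C. f i \<le> Suc t} = {i \<in> C. f i \<le> t} \<union> {i \<in> C. f i = Suc t}"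
      by auto
    have "g (Suc t) \<le> g t + card {i \<in> C. f i = Suc t}"
      unfolding g_def split by (rule card_Un_le)
    then show ?thesis using card_fiber_le_1[OF inj, of "Suc t"] by linarith
  qed
  have mono: "g t \<le> g (Suc t)" for t
    unfolding g_def using fin by (intro card_mono) auto
  have "g 0 \<le> W"
    using card_fiber_le_1[OF inj, of 0] W unfolding g_def by simp
  moreover have "{i \<in> C. f i \<le> Max (f ` C)} = C"
    using fin by auto
  then have "W \<le> g (Max (f ` C))"
    unfolding g_def using W by simp
  moreover have "\<bar>int (g (i + 1)) - int (g i)\<bar> \<le> 1" for i
    using step[of i] mono[of i] by simp
  ultimately have "\<exists>t \<le> Max (f ` C). int (g t) = int W"
    using nat0_intermed_int_val[of "Max (f ` C)" "int \<circ> g" "int W"] by simp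
  then show ?thesis
    unfolding g_def by auto
qed

lemma committee_subset: "committee n r s \<subseteq> {..<n}"
  unfolding committee_def by auto

lemma finite_committee: "finite (committee n r s)"
  by (rule finite_subset[OF committee_subset finite_lessThan])

lemma committee_props_card_ge:
  assumes "committee_props W B {..<n} (committee n r s)"
  shows "W \<le> card (committee n r s)"
proof -
  have "committee n r s \<inter> {..<n} = committee n r s"
    by (rule Int_absorb2[OF committee_subset])
  with assms show ?thesis
    unfolding committee_props_def by simp
qed

lemma conv_sent_subset_committee: "{j. conv_sent n W r j} \<subseteq> committee n r Converge"
  unfolding conv_sent_def by auto

lemma mv_execution_inj_init:
  "mv_execution n W B r \<Longrightarrow> j < n \<Longrightarrow> inj_on (t_init r j) (committee n r Init)"
  unfolding mv_execution_def by (elim conjE) blast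

lemma mv_execution_inj_conv:
  "mv_execution n W B r \<Longrightarrow> k < n \<Longrightarrow> inj_on (t_conv r k) {j. conv_sent n W r j}"
  unfolding mv_execution_def by (elim conjE) blast

lemma mv_decided_Bot_iff:
  "mv_execution n W B r \<Longrightarrow> k < n \<Longrightarrow> decided r k = Some Bot \<longleftrightarrow> ba_out r k = Some True"
  unfolding mv_execution_def by (elim conjE) blast

lemma mv_decided_Val:
  "mv_execution n W B r \<Longrightarrow> k < n \<Longrightarrow> decided r k = Some (Val w) \<Longrightarrow>
    \<exists>j. conv_sent n W r j \<and> conv_content n W r j \<and> w = input r j"
  unfolding mv_execution_def by (elim conjE) blast

lemma mv_decides_after_false:
  "mv_execution n W B r \<Longrightarrow> k < n \<Longrightarrow> ba_out r k = Some False \<Longrightarrow>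
    conv_sent n W r j \<Longrightarrow> conv_content n W r j \<Longrightarrow> decided r k \<noteq> None"
  unfolding mv_execution_def by (elim conjE) blast

lemma mv_reaches_init:
  assumes exec: "mv_execution n W B r" and "j < n"
    and W: "1 \<le> W" "W \<le> card (committee n r Init)"
  shows "reaches_init n W r j"
proof -
  obtain t where "card {i \<in> committee n r Init. t_init r j i \<le> t} = W"
    using inj_on_arrivals_hit_threshold[OF finite_committee mv_execution_inj_init[OF exec \<open>j < n\<close>] W]
    by blast
  then show ?thesis
    unfolding reaches_init_def init_set_at_def by auto
qed

lemma mv_conv_senders:
  assumes "mv_execution n W B r" and "1 \<le> W" "W \<le> card (committee n r Init)"
  shows "{j. conv_sent n W r j} = committee n r Converge"
  using mv_reaches_init[OF assms(1) _ assms(2,3)] committee_subset[of n r Converge]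
  unfolding conv_sent_def by auto

lemma card_init_qc_set:
  assumes "reaches_init n W r j"
  shows "card (init_qc_set n W r j) = W"
  using assms unfolding reaches_init_def init_qc_set_def init_thr_time_def by (rule LeastI_ex)

lemma conv_content_unanimous:
  assumes inputs: "\<forall>i<n. input r i = v" and "1 \<le> W" and sent: "conv_sent n W r j"
  shows "conv_content n W r j"
proof -
  have "card (init_qc_set n W r j) = W"
    using sent card_init_qc_set unfolding conv_sent_def by blast
  then have "init_qc_set n W r j \<noteq> {}"
    using \<open>1 \<le> W\<close> by auto
  moreover have "init_qc_set n W r j \<subseteq> {..<n}"
    unfolding init_qc_set_def init_set_at_def using committee_subset[of n r Init] by blast
  moreover have "j < n"
    using sent committee_subset[of n r Converge] unfolding conv_sent_def by blast
  ultimately show ?thesis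
    unfolding conv_content_def using inputs by auto
qed

lemma mv_reaches_conv:
  assumes exec: "mv_execution n W B r" and "k < n"
    and W: "1 \<le> W" "W \<le> card {j. conv_sent n W r j}"
  shows "reaches_conv n W r k"
proof -
  have fin: "finite {j. conv_sent n W r j}"
    by (rule finite_subset[OF conv_sent_subset_committee finite_committee])
  obtain t where "card {j \<in> {j. conv_sent n W r j}. t_conv r k j \<le> t} = W"
    using inj_on_arrivals_hit_threshold[OF fin mv_execution_inj_conv[OF exec \<open>k < n\<close>] W] by blast
  then show ?thesis
    unfolding reaches_conv_def conv_set_at_def by auto
qed

lemma conv_count_all_content:
  assumes "reaches_conv n W r k" and "\<And>j. conv_sent n W r j \<Longrightarrow> conv_content n W r j"
  shows "conv_count n W r k = W"
proof -
  let ?S = "conv_set_at n W r k (conv_thr_time n W r k)"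
  have "card ?S = W"
    using assms(1) unfolding reaches_conv_def conv_thr_time_def by (rule LeastI_ex)
  moreover have "{j \<in> ?S. conv_content n W r j} = ?S"
    using assms(2) unfolding conv_set_at_def by auto
  ultimately show ?thesis
    unfolding conv_count_def by simp
qed

lemma binary_ba_unanimous_output:
  assumes "binary_ba_ok n W B r" and "\<forall>k<n. ba_in n W B r k = Some b" and "k < n"
  shows "ba_out r k = Some b"
  using assms unfolding binary_ba_ok_def by (metis option.distinct(1))

lemma mv_decides_content_value:
  assumes exec: "mv_execution n W B r" and "k < n"
    and ba: "ba_out r k = Some False"
    and sent: "conv_sent n W r j" "conv_content n W r j"
    and content_value: "\<And>j. conv_sent n W r j \<Longrightarrow> conv_content n W r j \<Longrightarrow> input r j = v"
  shows "decided r k = Some (Val v)"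
proof -
  obtain x where x: "decided r k = Some x"
    using mv_decides_after_false[OF exec \<open>k < n\<close> ba sent] by blast
  then obtain w where "x = Val w"
    using mv_decided_Bot_iff[OF exec \<open>k < n\<close>] ba by (cases x) auto
  with x show ?thesis
    using mv_decided_Val[OF exec \<open>k < n\<close>] content_value by blast
qed

lemma mv_unanimous_decides:
  assumes exec: "mv_execution n W B r"
    and inputs: "\<forall>i<n. input r i = v"
    and init: "committee_props W B {..<n} (committee n r Init)"
    and conv: "committee_props W B {..<n} (committee n r Converge)"
    and ba: "binary_ba_ok n W B r"
    and W: "1 \<le> W" "B < W"
    and "k < n"
  shows "decided r k = Some (Val v)"
proof -
  have senders: "{j. conv_sent n W r j} = committee n r Converge"
    using mv_conv_senders[OF exec W(1) committee_props_card_ge[OF init]] .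
  have content: "conv_content n W r j" if "conv_sent n W r j" for j
    using conv_content_unanimous[OF inputs W(1) that] .
  have "ba_in n W B r k' = Some False" if "k' < n" for k'
  proof -
    have "reaches_conv n W r k'"
      using mv_reaches_conv[OF exec that W(1)] committee_props_card_ge[OF conv] senders by simp
    then show ?thesis
      using conv_count_all_content[OF _ content] \<open>B < W\<close> unfolding ba_in_def by simp
  qed
  then have ba_false: "ba_out r k = Some False"
    using binary_ba_unanimous_output[OF ba _ \<open>k < n\<close>] by blast
  have "committee n r Converge \<noteq> {}"
    using committee_props_card_ge[OF conv] W(1) by auto
  then obtain j where j: "conv_sent n W r j" "conv_content n W r j"
    using senders content by blast
  show ?thesis
  proof (rule mv_decides_content_value[OF exec \<open>k < n\<close> ba_false j])
    fix j' assume "conv_sent n W r j'"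
    then show "input r j' = v"
      using inputs committee_subset[of n r Converge] unfolding conv_sent_def by blast
  qed
qed

lemma lam_pos: "1 < n \<Longrightarrow> 0 < lam n"
  unfolding lam_def by simp

lemma Wq_ge_1:
  assumes "0 < lam n" "0 \<le> d n"
  shows "1 \<le> Wq d n"
proof -
  have "0 < (2/3 + 3 * d n) * lam n"
    using assms by simp
  then show ?thesis
    unfolding Wq_def by linarith
qed

lemma floor_less_ceiling:
  fixes x y :: "'a :: floor_ceiling"
  assumes "x < y"
  shows "\<lfloor>x\<rfloor> < \<lceil>y\<rceil>"
proof -
  have "of_int \<lfloor>x\<rfloor> < (of_int \<lceil>y\<rceil> :: 'a)"
    using le_less_trans[OF of_int_floor_le assms] le_of_int_ceiling by (rule less_le_trans)
  then show ?thesis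
    by (simp only: of_int_less_iff)
qed

lemma Bq_less_Wq:
  assumes "0 < lam n" "0 \<le> d n"
  shows "Bq d n < Wq d n"
proof -
  have "(1/3 - d n) * lam n < (2/3 + 3 * d n) * lam n"
    using assms by (intro mult_strict_right_mono) auto
  then have "\<lfloor>(1/3 - d n) * lam n\<rfloor> < \<lceil>(2/3 + 3 * d n) * lam n\<rceil>"
    by (rule floor_less_ceiling)
  then show ?thesis
    using Wq_ge_1[of n d] assms unfolding Wq_def Bq_def by linarith
qed

lemma eventually_lam_pos_d_nonneg:
  assumes "eventually (\<lambda>n. 1 / lam n < d n) sequentially"
  shows "eventually (\<lambda>n. 0 < lam n \<and> 0 \<le> d n) sequentially"
  using assms eventually_gt_at_top[of 1]
proof eventually_elim
  case (elim n)
  then have "0 < lam n"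
    using lam_pos by blast
  then have "0 < 1 / lam n"
    by simp
  with elim show ?case
    using \<open>0 < lam n\<close> by linarith
qed

theorem mainTheorem2:
  fixes M :: "nat \<Rightarrow> 'w measure"
    and R :: "nat \<Rightarrow> 'w \<Rightarrow> 'v mv_run"
    and v :: 'v
    and eps d :: "nat \<Rightarrow> real"
  assumes prob: "\<And>n. prob_space (M n)"
    and params: "eventually (\<lambda>n. 1 / (2 * ln (real n)) < eps n \<and> eps n < 1/3 \<and>
                   1 / lam n < d n \<and> d n < eps n / 3 - 1 / (3 * lam n)) sequentially"
    and exec: "\<And>n \<omega>. \<omega> \<in> space (M n) \<Longrightarrow> mv_execution n (Wq d n) (Bq d n) (R n \<omega>)"
    and same_input: "\<And>n \<omega> i. \<omega> \<in> space (M n) \<Longrightarrow> i < n \<Longrightarrow> input (R n \<omega>) i = v"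
    and S_init: "whp M (\<lambda>n \<omega>. committee_props (Wq d n) (Bq d n) {..<n} (committee n (R n \<omega>) Init))"
    and S_conv: "whp M (\<lambda>n \<omega>. committee_props (Wq d n) (Bq d n) {..<n} (committee n (R n \<omega>) Converge))"
    and BA: "whp M (\<lambda>n \<omega>. binary_ba_ok n (Wq d n) (Bq d n) (R n \<omega>))"
  shows "whp M (\<lambda>n \<omega>. \<forall>k<n. decided (R n \<omega>) k = Some (Val v))"
proof -
  have good: "whp M (\<lambda>n \<omega>.
      committee_props (Wq d n) (Bq d n) {..<n} (committee n (R n \<omega>) Init) \<and>
      committee_props (Wq d n) (Bq d n) {..<n} (committee n (R n \<omega>) Converge) \<and>
      binary_ba_ok n (Wq d n) (Bq d n) (R n \<omega>))" (is "whp M ?good")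
    using whp_conj[OF prob S_init whp_conj[OF prob S_conv BA]] .
  have "eventually (\<lambda>n. 1 / lam n < d n) sequentially"
    using params by (rule eventually_mono) blast
  then have "eventually (\<lambda>n. 0 < lam n \<and> 0 \<le> d n) sequentially"
    by (rule eventually_lam_pos_d_nonneg)
  then have "eventually (\<lambda>n. \<forall>\<omega> \<in> space (M n).
      ?good n \<omega> \<longrightarrow> (\<forall>k<n. decided (R n \<omega>) k = Some (Val v))) sequentially"
  proof eventually_elim
    case (elim n)
    then have W: "1 \<le> Wq d n" "Bq d n < Wq d n"
      using Wq_ge_1 Bq_less_Wq by blast+
    show ?case
    proof (intro ballI impI allI)
      fix \<omega> k
      assume \<omega>: "\<omega> \<in> space (M n)" and "?good n \<omega>" and "k < n"
      then show "decided (R n \<omega>) k = Some (Val v)"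
        using mv_unanimous_decides[OF exec[OF \<omega>] _ _ _ _ W] same_input[OF \<omega>] by blast
    qed
  qed
  then show ?thesis
    by (rule whp_eventually_mono[OF good])
qed

end
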